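(* Let $\mathcal{H}$ be a complex Hilbert space, let $A\in\mathcal{B}(\mathcal{H})$ be a nonzero positive operator, and let $\mathbb{A}=\begin{pmatrix}A&O\\O&A\end{pmatrix}$ on $\mathcal{H}\oplus\mathcal{H}$. Let $P,Q\in\mathcal{B}_A(\mathcal{H})$. Then $$\omega_{\mathbb{A}}\left[\begin{pmatrix}P&Q\\O&O\end{pmatrix}\right]\geq\frac12\max\{\omega_A(P+iQ),\omega_A(P-iQ)\}.$$
   Context: For a positive operator $A$ on $\mathcal{H}$, $\langle x,y\rangle_A:=\langle Ax,y\rangle$ and $\|x\|_A:=\sqrt{\langle x,x\rangle_A}$. $\mathcal{B}_A(\mathcal{H})$ is the set of $T\in\mathcal{B}(\mathcal{H})$ with $\mathcal{R}(T^*A)\subseteq\mathcal{R}(A)$. $\omega_A(T):=\sup\{|\langle Tx,x\rangle_A|:x\in\mathcal{H},\|x\|_A=1\}$. $\omega_{\mathbb{A}}$ is defined analogously on $\mathcal{H}\oplus\mathcal{H}$ with $\langle (x_1,x_2),(y_1,y_2)\rangle_{\mathbb{A}}=\langle x_1,y_1\rangle_A+\langle x_2,y_2\rangle_A$. *)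

theory Defs
  imports "HOL-Analysis.Analysis" "HOL-Library.Complex_Order"
begin

text \<open>Convention: cinner is linear in the first argument, conjugate linear in the second.
  A complex Hilbert space is a type of sort complex_inner_space + complete_space.\<close>

class complex_inner_space = real_normed_vector +
  fixes scaleC :: "complex \<Rightarrow> 'a \<Rightarrow> 'a"
    and cinner :: "'a \<Rightarrow> 'a \<Rightarrow> complex"
  assumes scaleC_add_right: "scaleC a (x + y) = scaleC a x + scaleC a y"
    and scaleC_add_left: "scaleC (a + b) x = scaleC a x + scaleC b x"
    and scaleC_scaleC: "scaleC a (scaleC b x) = scaleC (a * b) x"
    and scaleC_one: "scaleC 1 x = x"
    and scaleR_scaleC: "scaleR r x = scaleC (complex_of_real r) x"
    and cinner_commute: "cinner x y = cnj (cinner y x)"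
    and cinner_add_left: "cinner (x + y) z = cinner x z + cinner y z"
    and cinner_scaleC_left: "cinner (scaleC a x) y = a * cinner x y"
    and cinner_ge_zero: "0 \<le> cinner x x"
    and cinner_eq_zero_iff: "cinner x x = 0 \<longleftrightarrow> x = 0"
    and norm_eq_sqrt_cinner: "norm x = sqrt (Re (cinner x x))"

definition bounded_clinear_op :: "('a::complex_inner_space \<Rightarrow> 'a) \<Rightarrow> bool" where
  "bounded_clinear_op T \<longleftrightarrow>
     (\<forall>x y. T (x + y) = T x + T y) \<and> (\<forall>c x. T (scaleC c x) = scaleC c (T x)) \<and>
     (\<exists>K. \<forall>x. norm (T x) \<le> norm x * K)"

text \<open>Hilbert adjoint T* (exists uniquely for bounded operators on a Hilbert space).\<close>
definition adjoint_op :: "('a::complex_inner_space \<Rightarrow> 'a) \<Rightarrow> ('a \<Rightarrow> 'a)" where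
  "adjoint_op T = (SOME S. \<forall>x y. cinner (T x) y = cinner x (S y))"

definition positive_op :: "('a::complex_inner_space \<Rightarrow> 'a) \<Rightarrow> bool" where
  "positive_op A \<longleftrightarrow> bounded_clinear_op A \<and> (\<forall>x. 0 \<le> cinner (A x) x)"

definition A_inner :: "('a::complex_inner_space \<Rightarrow> 'a) \<Rightarrow> 'a \<Rightarrow> 'a \<Rightarrow> complex" where
  "A_inner A x y = cinner (A x) y"

definition A_norm :: "('a::complex_inner_space \<Rightarrow> 'a) \<Rightarrow> 'a \<Rightarrow> real" where
  "A_norm A x = sqrt (Re (A_inner A x x))"

definition B_A :: "('a::complex_inner_space \<Rightarrow> 'a) \<Rightarrow> ('a \<Rightarrow> 'a) set" where
  "B_A A = {T. bounded_clinear_op T \<and> range (adjoint_op T \<circ> A) \<subseteq> range A}"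

definition omega_A :: "('a::complex_inner_space \<Rightarrow> 'a) \<Rightarrow> ('a \<Rightarrow> 'a) \<Rightarrow> real" where
  "omega_A A T = Sup {cmod (A_inner A (T x) x) | x. A_norm A x = 1}"

text \<open>The operator diag(A,A) on H (+) H, realised as the product type 'a \<times> 'a.\<close>
definition AA_inner :: "('a::complex_inner_space \<Rightarrow> 'a) \<Rightarrow> 'a \<times> 'a \<Rightarrow> 'a \<times> 'a \<Rightarrow> complex" where
  "AA_inner A x y = A_inner A (fst x) (fst y) + A_inner A (snd x) (snd y)"

definition AA_norm :: "('a::complex_inner_space \<Rightarrow> 'a) \<Rightarrow> 'a \<times> 'a \<Rightarrow> real" where
  "AA_norm A x = sqrt (Re (AA_inner A x x))"

definition omega_AA :: "('a::complex_inner_space \<Rightarrow> 'a) \<Rightarrow> ('a \<times> 'a \<Rightarrow> 'a \<times> 'a) \<Rightarrow> real" where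
  "omega_AA A T = Sup {cmod (AA_inner A (T x) x) | x. AA_norm A x = 1}"

definition block_op :: "('a \<Rightarrow> 'a::complex_inner_space) \<Rightarrow> ('a \<Rightarrow> 'a) \<Rightarrow> ('a \<Rightarrow> 'a) \<Rightarrow> ('a \<Rightarrow> 'a)
    \<Rightarrow> ('a \<times> 'a \<Rightarrow> 'a \<times> 'a)" where
  "block_op T11 T12 T21 T22 = (\<lambda>(x1, x2). (T11 x1 + T12 x2, T21 x1 + T22 x2))"

end

theory Submission
  imports Defs
begin

(* For |s| = 1 and ||x||_A = 1 the vector z = (x, s x) / sqrt 2 has ||z||_AA = 1, and the block
   row B = [[P, Q], [O, O]] satisfies <B z, z>_AA = <(P + s Q) x, x>_A / 2; take s = i and s = -i.
   The substance lies in the finiteness of the suprema (for an unbounded set of reals, Sup is an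
   unspecified value), i.e. in the fact that operators in B_A(H) are bounded for the A-seminorm.
   Riesz representation provides adjoints; from R(T* A) <= R(A) the uniform boundedness principle
   gives ||A T u|| <= M ||A u||. Choosing W with T* A y = A (W y), the operator S = W T is
   A-selfadjoint with A S = T* A T and ||A S u|| <= c ||A u||; log-convexity of k |-> ||S^k x||_A
   (a spectral radius argument) yields ||S x||_A <= c ||x||_A, hence ||T x||_A^2 = <A S x, x> is at
   most c ||x||_A^2. *)

section \<open>Complex inner product spaces\<close>

global_interpretation scaleC: module "scaleC :: complex \<Rightarrow> 'a \<Rightarrow> 'a::complex_inner_space"
  by unfold_locales (simp_all add: scaleC_add_right scaleC_add_left scaleC_scaleC scaleC_one)

lemma cinner_zero_left [simp]: "cinner 0 (y::'a::complex_inner_space) = 0"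
  using cinner_add_left[of 0 0 y] by simp

lemma cinner_zero_right [simp]: "cinner (x::'a::complex_inner_space) 0 = 0"
  using cinner_commute[of x 0] by simp

lemma cinner_add_right: "cinner (x::'a::complex_inner_space) (y + z) = cinner x y + cinner x z"
  by (metis cinner_commute cinner_add_left complex_cnj_add)

lemma cinner_scaleC_right: "cinner (x::'a::complex_inner_space) (scaleC a y) = cnj a * cinner x y"
  by (metis cinner_commute cinner_scaleC_left complex_cnj_mult)

lemma cinner_diff_left: "cinner (x - y::'a::complex_inner_space) z = cinner x z - cinner y z"
  by (metis add_diff_cancel cinner_add_left diff_add_cancel)

lemma cinner_diff_right: "cinner (x::'a::complex_inner_space) (y - z) = cinner x y - cinner x z"
  by (metis cinner_commute cinner_diff_left complex_cnj_diff)

lemma cinner_scaleR_left: "cinner (scaleR r x::'a::complex_inner_space) y = of_real r * cinner x y"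
  by (simp add: scaleR_scaleC cinner_scaleC_left)

lemma cinner_scaleR_right: "cinner (x::'a::complex_inner_space) (scaleR r y) = of_real r * cinner x y"
  by (simp add: scaleR_scaleC cinner_scaleC_right)

lemma power2_norm_eq_cinner: "(norm x)\<^sup>2 = Re (cinner (x::'a::complex_inner_space) x)"
  using cinner_ge_zero[of x] by (simp add: norm_eq_sqrt_cinner less_eq_complex_def)

lemma cinner_self_eq_power2_norm: "cinner (x::'a::complex_inner_space) x = of_real ((norm x)\<^sup>2)"
  using cinner_ge_zero[of x] by (simp add: power2_norm_eq_cinner complex_eq_iff less_eq_complex_def)

lemma discriminant_le_of_nonneg_quadratic:
  fixes a b c :: real
  assumes "\<And>t. 0 \<le> a * t\<^sup>2 - 2 * b * t + c" and "0 \<le> a"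
  shows "b\<^sup>2 \<le> a * c"
proof (cases "a = 0")
  case True
  have "b = 0"
  proof (rule ccontr)
    assume "b \<noteq> 0"
    then show False
      using assms(1)[of "(c + 1) / (2 * b)"] True by (simp add: field_simps)
  qed
  then show ?thesis using assms(1)[of 0] True by simp
next
  case False
  then have "0 < a" using assms(2) by simp
  then show ?thesis
    using assms(1)[of "b / a"] by (simp add: field_simps power2_eq_square)
qed

definition hermitian_form :: "('a::complex_inner_space \<Rightarrow> 'a \<Rightarrow> complex) \<Rightarrow> bool" where
  "hermitian_form B \<longleftrightarrow> (\<forall>x y z. B (x + y) z = B x z + B y z) \<and>
     (\<forall>a x y. B (scaleC a x) y = a * B x y) \<and> (\<forall>x y. B x y = cnj (B y x))"

lemma hermitian_form_cinner: "hermitian_form cinner"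
  by (simp add: hermitian_form_def cinner_add_left cinner_scaleC_left flip: cinner_commute)

lemma hermitian_form_quadratic:
  assumes "hermitian_form B"
  shows "Re (B (x - scaleC (of_real t * B x y) y) (x - scaleC (of_real t * B x y) y)) =
    Re (B x x) - 2 * t * (cmod (B x y))\<^sup>2 + t\<^sup>2 * (cmod (B x y))\<^sup>2 * Re (B y y)"
proof -
  define c where "c = B x y"
  have addl: "B (u + v) w = B u w + B v w" and scl: "B (scaleC a u) w = a * B u w"
    and herm: "B u w = cnj (B w u)" for u v w a
    using assms(1) unfolding hermitian_form_def by blast+
  have diffl: "B (u - v) w = B u w - B v w" for u v w
    by (metis addl add_diff_cancel diff_add_cancel)
  have diffr: "B u (v - w) = B u v - B u w" and scr: "B u (scaleC a v) = cnj a * B u v" for u v w a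
    by (metis herm diffl complex_cnj_diff, metis herm scl complex_cnj_mult)
  define s where "s = of_real t * c"
  have "B (x - scaleC s y) (x - scaleC s y) = B x x - cnj s * c - s * cnj c + (s * cnj s) * B y y"
    using herm[of y x] by (simp add: diffl diffr scl scr c_def algebra_simps)
  moreover have "cnj c * c = of_real ((cmod c)\<^sup>2)"
    by (simp add: complex_norm_square mult.commute del: of_real_power)
  moreover have "cnj s * c = of_real t * (cnj c * c)" "s * cnj c = of_real t * (cnj c * c)"
    "s * cnj s = (of_real t)\<^sup>2 * (cnj c * c)"
    by (simp_all add: s_def ac_simps power2_eq_square)
  ultimately have "B (x - scaleC s y) (x - scaleC s y) =
      B x x - of_real (2 * t * (cmod c)\<^sup>2) + of_real (t\<^sup>2 * (cmod c)\<^sup>2) * B y y"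
    by simp
  then show ?thesis by (simp add: s_def c_def)
qed

lemma hermitian_form_Cauchy_Schwarz:
  assumes "hermitian_form B" and "\<And>x. 0 \<le> Re (B x x)"
  shows "(cmod (B x y))\<^sup>2 \<le> Re (B x x) * Re (B y y)"
proof -
  let ?m = "(cmod (B x y))\<^sup>2"
  have "0 \<le> (?m * Re (B y y)) * t\<^sup>2 - 2 * ?m * t + Re (B x x)" for t
    using assms(2)[of "x - scaleC (of_real t * B x y) y"] hermitian_form_quadratic[OF assms(1)]
    by (simp add: algebra_simps)
  then have "?m\<^sup>2 \<le> (?m * Re (B y y)) * Re (B x x)"
    by (rule discriminant_le_of_nonneg_quadratic) (simp add: assms(2))
  then show ?thesis
    by (cases "?m = 0") (simp_all add: assms(2) power2_eq_square mult_ac)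
qed

lemma cinner_Cauchy_Schwarz: "cmod (cinner x y) \<le> norm x * norm (y::'a::complex_inner_space)"
proof -
  have "(cmod (cinner x y))\<^sup>2 \<le> (norm x * norm y)\<^sup>2"
    using hermitian_form_Cauchy_Schwarz[OF hermitian_form_cinner]
    by (simp add: power_mult_distrib flip: power2_norm_eq_cinner)
  then show ?thesis by (simp add: power2_le_iff_abs_le)
qed

lemma bounded_linear_cinner_left: "bounded_linear (\<lambda>x. cinner (x::'a::complex_inner_space) y)"
  by (rule bounded_linear_intro[of _ "norm y"])
    (simp_all add: cinner_add_left cinner_scaleR_left scaleR_conv_of_real cinner_Cauchy_Schwarz)

lemma parallelogram_law:
  "(norm (x + y))\<^sup>2 + (norm (x - y))\<^sup>2 = 2 * (norm x)\<^sup>2 + 2 * (norm (y::'a::complex_inner_space))\<^sup>2"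
proof -
  have "cinner (x + y) (x + y) + cinner (x - y) (x - y) = 2 * cinner x x + 2 * cinner y y"
    by (simp add: cinner_add_left cinner_add_right cinner_diff_left cinner_diff_right)
  then show ?thesis
    by (metis power2_norm_eq_cinner plus_complex.sel(1) mult_2)
qed

lemma parallelogram_midpoint_bound:
  fixes a b z :: "'a::complex_inner_space"
  assumes "d \<le> dist z (scaleR (1/2) (a + b))" and "0 \<le> d"
  shows "(dist a b)\<^sup>2 \<le> 2 * (dist z a)\<^sup>2 + 2 * (dist z b)\<^sup>2 - 4 * d\<^sup>2"
proof -
  have "z - a + (z - b) = scaleR 2 (z - scaleR (1/2) (a + b))"
    by (simp add: algebra_simps scaleR_2)
  then have "(norm (z - a + (z - b)))\<^sup>2 = 4 * (dist z (scaleR (1/2) (a + b)))\<^sup>2"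
    by (simp add: dist_norm power_mult_distrib)
  moreover have "d\<^sup>2 \<le> (dist z (scaleR (1/2) (a + b)))\<^sup>2"
    using assms by (simp add: power_mono)
  ultimately show ?thesis
    using parallelogram_law[of "z - a" "z - b"] by (simp add: dist_norm norm_minus_commute)
qed

section \<open>Riesz representation and adjoints\<close>

lemma Cauchy_of_dist_le_add:
  fixes f :: "nat \<Rightarrow> 'a::metric_space"
  assumes "g \<longlonglongrightarrow> 0" and "\<And>j k. dist (f j) (f k) \<le> g j + g k"
  shows "Cauchy f"
proof (rule metric_CauchyI)
  fix e :: real
  assume "0 < e"
  then obtain M where M: "\<And>n. n \<ge> M \<Longrightarrow> norm (g n - 0) < e / 2"
    using LIMSEQ_D[OF assms(1), of "e / 2"] by auto
  have "dist (f m) (f n) < e" if "m \<ge> M" "n \<ge> M" for m n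
    using assms(2)[of m n] M[OF that(1)] M[OF that(2)] by (simp add: abs_less_iff)
  then show "\<exists>M. \<forall>m\<ge>M. \<forall>n\<ge>M. dist (f m) (f n) < e"
    by blast
qed

lemma closest_point_exists:
  fixes N :: "'a::{complex_inner_space, complete_space} set"
  assumes "closed N" and "N \<noteq> {}"
    and midpoint: "\<And>a b. a \<in> N \<Longrightarrow> b \<in> N \<Longrightarrow> scaleR (1/2) (a + b) \<in> N"
  shows "\<exists>n0\<in>N. \<forall>n\<in>N. dist z n0 \<le> dist z n"
proof -
  define d where "d = infdist z N"
  have d: "0 \<le> d" "\<And>n. n \<in> N \<Longrightarrow> d \<le> dist z n"
    by (simp_all add: d_def infdist_nonneg infdist_le)
  have "\<exists>a\<in>N. (dist z a)\<^sup>2 < d\<^sup>2 + inverse (Suc k)" for k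
  proof -
    have "d < sqrt (d\<^sup>2 + inverse (Suc k))"
      by (rule real_less_rsqrt) simp
    then obtain a where "a \<in> N" and a: "dist z a < sqrt (d\<^sup>2 + inverse (Suc k))"
      using assms(2) by (auto simp: d_def infdist_notempty cINF_less_iff)
    have "(dist z a)\<^sup>2 < d\<^sup>2 + inverse (Suc k)"
      using power_strict_mono[OF a zero_le_dist, of 2] by simp
    then show ?thesis
      using \<open>a \<in> N\<close> by blast
  qed
  then obtain f where f: "\<And>k. f k \<in> N" "\<And>k. (dist z (f k))\<^sup>2 < d\<^sup>2 + inverse (Suc k)"
    by metis
  have "Cauchy f"
  proof (rule Cauchy_of_dist_le_add)
    show "(\<lambda>k. sqrt (2 * inverse (Suc k))) \<longlonglongrightarrow> 0"
      using tendsto_real_sqrt[OF tendsto_mult_right_zero[OF LIMSEQ_inverse_real_of_nat, of 2]] by simp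
    show "dist (f j) (f k) \<le> sqrt (2 * inverse (Suc j)) + sqrt (2 * inverse (Suc k))" for j k
    proof -
      have "(dist (f j) (f k))\<^sup>2 \<le> 2 * inverse (Suc j) + 2 * inverse (Suc k)"
        using parallelogram_midpoint_bound[OF d(2)[OF midpoint[OF f(1) f(1)]] d(1), of j k]
          f(2)[of j] f(2)[of k] by simp
      then have "dist (f j) (f k) \<le> sqrt (2 * inverse (Suc j) + 2 * inverse (Suc k))"
        by (simp add: real_le_rsqrt)
      then show ?thesis
        using sqrt_add_le_add_sqrt[of "2 * inverse (Suc j)" "2 * inverse (Suc k)"] by simp
    qed
  qed
  then obtain n0 where lim: "f \<longlonglongrightarrow> n0"
    using Cauchy_convergent_iff convergent_def by blast
  have "n0 \<in> N"
    using closed_sequentially[OF assms(1) f(1) lim] .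
  have "(\<lambda>k. (dist z (f k))\<^sup>2) \<longlonglongrightarrow> (dist z n0)\<^sup>2"
    by (intro tendsto_intros lim)
  moreover have "(\<lambda>k. d\<^sup>2 + inverse (Suc k)) \<longlonglongrightarrow> d\<^sup>2"
    using tendsto_add[OF tendsto_const LIMSEQ_inverse_real_of_nat] by simp
  ultimately have "(dist z n0)\<^sup>2 \<le> d\<^sup>2"
    using f(2) by (meson LIMSEQ_le less_imp_le)
  then have "dist z n0 \<le> d"
    using d(1) by (simp add: power2_le_iff_abs_le)
  then show ?thesis
    using \<open>n0 \<in> N\<close> d(2) by force
qed

lemma closest_point_orthogonal:
  fixes N :: "'a::complex_inner_space set"
  assumes subspace: "\<And>a b c. a \<in> N \<Longrightarrow> b \<in> N \<Longrightarrow> a + scaleC c b \<in> N"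
    and "n0 \<in> N" and closest: "\<And>n. n \<in> N \<Longrightarrow> dist z n0 \<le> dist z n" and "n \<in> N"
  shows "cinner (z - n0) n = 0"
proof -
  define v where "v = z - n0"
  define c where "c = cinner v n"
  have "0 \<le> ((cmod c)\<^sup>2 * (norm n)\<^sup>2) * t\<^sup>2 - 2 * (cmod c)\<^sup>2 * t + 0" for t
  proof -
    have "n0 + scaleC (of_real t * c) n \<in> N"
      using assms by blast
    then have "norm v \<le> norm (v - scaleC (of_real t * c) n)"
      using closest by (fastforce simp: v_def dist_norm algebra_simps)
    then have "(norm v)\<^sup>2 \<le> (norm (v - scaleC (of_real t * c) n))\<^sup>2"
      by (simp add: power_mono)
    then show ?thesis
      using hermitian_form_quadratic[OF hermitian_form_cinner, of v t n]
      by (simp add: c_def power2_norm_eq_cinner mult_ac)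
  qed
  from discriminant_le_of_nonneg_quadratic[OF this] have "((cmod c)\<^sup>2)\<^sup>2 \<le> 0"
    by simp
  then show ?thesis
    by (simp add: c_def v_def)
qed

lemma riesz_representation:
  fixes f :: "'a::{complex_inner_space, complete_space} \<Rightarrow> complex"
  assumes add: "\<And>x y. f (x + y) = f x + f y" and scaleC: "\<And>c x. f (scaleC c x) = c * f x"
    and bounded: "\<And>x. cmod (f x) \<le> K * norm x"
  shows "\<exists>v. \<forall>x. f x = cinner x v"
proof (cases "\<forall>x. f x = 0")
  case True
  then show ?thesis by (intro exI[of _ 0]) simp
next
  case False
  then obtain z where "f z \<noteq> 0" by blast
  interpret f: bounded_linear f
    by (rule bounded_linear_intro[of _ K])
      (simp_all add: add scaleR_scaleC scaleC scaleR_conv_of_real bounded mult.commute)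
  define N where "N = {x. f x = 0}"
  have "closed N"
    unfolding N_def by (intro closed_Collect_eq f.continuous_on continuous_on_id continuous_on_const)
  moreover have "0 \<in> N"
    by (simp add: N_def)
  moreover have "scaleR (1/2) (a + b) \<in> N" if "a \<in> N" "b \<in> N" for a b
    using that by (simp add: N_def f.scaleR f.add)
  ultimately obtain n0 where n0: "n0 \<in> N" "\<And>n. n \<in> N \<Longrightarrow> dist z n0 \<le> dist z n"
    using closest_point_exists[of N z] by blast
  define w where "w = z - n0"
  have orth: "cinner w n = 0" if "n \<in> N" for n
    unfolding w_def by (rule closest_point_orthogonal[OF _ n0 that]) (auto simp: N_def add scaleC)
  have "f w = f z"
    using n0(1) by (simp add: w_def f.diff N_def)
  then have "w \<noteq> 0"
    using \<open>f z \<noteq> 0\<close> by auto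
  then have ww: "cinner w w \<noteq> 0"
    using cinner_eq_zero_iff by blast
  have "f x = cinner x (scaleC (cnj (f w / cinner w w)) w)" for x
  proof -
    have "scaleC (f x) w - scaleC (f w) x \<in> N"
      by (simp add: N_def f.diff scaleC)
    then have "cinner (scaleC (f x) w - scaleC (f w) x) w = 0"
      using orth cinner_commute by (metis complex_cnj_zero)
    then have "f x * cinner w w = f w * cinner x w"
      by (simp add: cinner_diff_left cinner_scaleC_left)
    then show ?thesis
      using ww by (simp add: cinner_scaleC_right field_simps)
  qed
  then show ?thesis by blast
qed

lemma bounded_clinear_op_add: "bounded_clinear_op T \<Longrightarrow> T (x + y) = T x + T y"
  unfolding bounded_clinear_op_def by blast

lemma bounded_clinear_op_scaleC: "bounded_clinear_op T \<Longrightarrow> T (scaleC c x) = scaleC c (T x)"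
  unfolding bounded_clinear_op_def by blast

lemma bounded_clinear_op_scaleR: "bounded_clinear_op T \<Longrightarrow> T (scaleR r x) = scaleR r (T x)"
  by (simp add: scaleR_scaleC bounded_clinear_op_scaleC)

lemma bounded_clinear_op_zero: "bounded_clinear_op T \<Longrightarrow> T 0 = 0"
  using bounded_clinear_op_scaleC[of T 0 0] by simp

lemma bounded_clinear_op_bound:
  assumes "bounded_clinear_op T"
  shows "\<exists>K\<ge>0. \<forall>x. norm (T x) \<le> K * norm x"
proof -
  obtain K where "\<And>x. norm (T x) \<le> norm x * K"
    using assms unfolding bounded_clinear_op_def by blast
  then have "norm (T x) \<le> \<bar>K\<bar> * norm x" for x
    by (metis abs_ge_self mult.commute mult_left_mono norm_ge_zero order_trans)
  then show ?thesis by (intro exI[of _ "\<bar>K\<bar>"]) auto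
qed

lemma adjoint_op_cinner:
  fixes T :: "'a::{complex_inner_space, complete_space} \<Rightarrow> 'a"
  assumes "bounded_clinear_op T"
  shows "cinner (T x) y = cinner x (adjoint_op T y)"
proof -
  obtain K where K: "\<And>x. norm (T x) \<le> K * norm x"
    using bounded_clinear_op_bound[OF assms] by blast
  have "\<exists>v. \<forall>x. cinner (T x) y = cinner x v" for y
  proof (rule riesz_representation)
    show "cinner (T (x + z)) y = cinner (T x) y + cinner (T z) y" for x z
      by (simp add: bounded_clinear_op_add[OF assms] cinner_add_left)
    show "cinner (T (scaleC c x)) y = c * cinner (T x) y" for c x
      by (simp add: bounded_clinear_op_scaleC[OF assms] cinner_scaleC_left)
    show "cmod (cinner (T x) y) \<le> (K * norm y) * norm x" for x
      using order_trans[OF cinner_Cauchy_Schwarz mult_right_mono[OF K norm_ge_zero]]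
      by (simp add: mult_ac)
  qed
  then have "\<exists>S. \<forall>x y. cinner (T x) y = cinner x (S y)"
    by metis
  then have "\<forall>x y. cinner (T x) y = cinner x (adjoint_op T y)"
    unfolding adjoint_op_def by (rule someI_ex)
  then show ?thesis
    by blast
qed

lemma adjoint_op_bound:
  fixes T :: "'a::{complex_inner_space, complete_space} \<Rightarrow> 'a"
  assumes "bounded_clinear_op T"
  shows "\<exists>K\<ge>0. \<forall>y. norm (adjoint_op T y) \<le> K * norm y"
proof -
  obtain K where "K \<ge> 0" and K: "\<And>x. norm (T x) \<le> K * norm x"
    using bounded_clinear_op_bound[OF assms] by blast
  have "norm (adjoint_op T y) \<le> K * norm y" for y
  proof -
    let ?v = "adjoint_op T y"
    have "norm ?v * norm ?v = Re (cinner (T ?v) y)"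
      by (simp add: adjoint_op_cinner[OF assms] power2_eq_square flip: power2_norm_eq_cinner)
    also have "\<dots> \<le> norm (T ?v) * norm y"
      using complex_Re_le_cmod cinner_Cauchy_Schwarz order_trans by blast
    also have "\<dots> \<le> (K * norm y) * norm ?v"
      using mult_right_mono[OF K[of ?v] norm_ge_zero[of y]] by (simp add: mult_ac)
    finally show ?thesis
      using \<open>K \<ge> 0\<close> by (cases "norm ?v = 0") (simp_all add: mult_le_cancel_right)
  qed
  then show ?thesis
    using \<open>K \<ge> 0\<close> by blast
qed

section \<open>Positive operators and the A-semi-inner product\<close>

lemma positive_op_bounded: "positive_op A \<Longrightarrow> bounded_clinear_op A"
  unfolding positive_op_def by blast

lemma positive_op_cinner_self:
  "positive_op A \<Longrightarrow> Im (cinner (A x) x) = 0 \<and> 0 \<le> Re (cinner (A x) x)"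
  unfolding positive_op_def by (auto simp: less_eq_complex_def)

lemma positive_op_selfadjoint:
  assumes "positive_op A"
  shows "cinner (A x) y = cinner x (A y)"
proof -
  note linear = bounded_clinear_op_add[OF positive_op_bounded[OF assms]]
    bounded_clinear_op_scaleC[OF positive_op_bounded[OF assms]]
  note real = positive_op_cinner_self[OF assms, THEN conjunct1]
  \<comment> \<open>Polarization: realness of the quadratic form at x + y and x + i y forces a = cnj b.\<close>
  define a b where "a = cinner (A x) y" and "b = cinner (A y) x"
  have "cinner (A (x + y)) (x + y) = cinner (A x) x + cinner (A y) y + a + b"
    by (simp add: linear cinner_add_left cinner_add_right a_def b_def)
  from arg_cong[where f = Im, OF this] have "Im a + Im b = 0"
    using real[of "x + y"] real[of x] real[of y] by simp
  moreover have "cinner (A (x + scaleC \<i> y)) (x + scaleC \<i> y)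
      = cinner (A x) x + cinner (A y) y - \<i> * a + \<i> * b"
    by (simp add: linear cinner_add_left cinner_add_right cinner_scaleC_left cinner_scaleC_right
        a_def b_def algebra_simps)
  from arg_cong[where f = Im, OF this] have "Re b - Re a = 0"
    using real[of "x + scaleC \<i> y"] real[of x] real[of y] by simp
  ultimately have "a = cnj b"
    by (simp add: complex_eq_iff)
  then show ?thesis
    using cinner_commute[of x "A y"] by (simp add: a_def b_def)
qed

lemma hermitian_form_A_inner:
  assumes "positive_op A"
  shows "hermitian_form (A_inner A)"
  unfolding hermitian_form_def A_inner_def
proof (intro conjI allI)
  note bounded = positive_op_bounded[OF assms]
  show "cinner (A (x + y)) z = cinner (A x) z + cinner (A y) z" for x y z
    by (simp add: bounded_clinear_op_add[OF bounded] cinner_add_left)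
  show "cinner (A (scaleC a x)) y = a * cinner (A x) y" for a x y
    by (simp add: bounded_clinear_op_scaleC[OF bounded] cinner_scaleC_left)
  show "cinner (A x) y = cnj (cinner (A y) x)" for x y
    using positive_op_selfadjoint[OF assms, of x y] cinner_commute[of x "A y"] by simp
qed

lemma A_norm_nonneg: "positive_op A \<Longrightarrow> 0 \<le> A_norm A x"
  using positive_op_cinner_self[of A x] by (simp add: A_norm_def A_inner_def)

lemma power2_A_norm: "positive_op A \<Longrightarrow> (A_norm A x)\<^sup>2 = Re (A_inner A x x)"
  using positive_op_cinner_self[of A x] by (simp add: A_norm_def A_inner_def)

lemma A_inner_Cauchy_Schwarz:
  assumes "positive_op A"
  shows "cmod (A_inner A x y) \<le> A_norm A x * A_norm A y"
proof -
  have "(cmod (A_inner A x y))\<^sup>2 \<le> (A_norm A x * A_norm A y)\<^sup>2"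
    using hermitian_form_Cauchy_Schwarz[OF hermitian_form_A_inner[OF assms]]
      positive_op_cinner_self[OF assms]
    by (simp add: power_mult_distrib power2_A_norm[OF assms] A_inner_def)
  then show ?thesis
    by (rule power2_le_imp_le) (simp add: A_norm_nonneg[OF assms])
qed

lemma A_norm_scaleC:
  assumes "positive_op A"
  shows "A_norm A (scaleC a x) = cmod a * A_norm A x"
proof -
  have "A_inner A (scaleC a x) (scaleC a x) = of_real ((cmod a)\<^sup>2) * A_inner A x x"
    by (simp add: A_inner_def bounded_clinear_op_scaleC positive_op_bounded[OF assms]
        cinner_scaleC_left cinner_scaleC_right complex_norm_square mult.assoc del: of_real_power)
  then show ?thesis
    by (simp add: A_norm_def real_sqrt_mult)
qed

lemma A_norm_unit_exists:
  assumes "positive_op A" and "A \<noteq> (\<lambda>x. 0)"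
  shows "\<exists>x. A_norm A x = 1"
proof -
  obtain x where "A x \<noteq> 0"
    using assms(2) by blast
  then have "0 < cinner (A x) (A x)"
    using cinner_eq_zero_iff cinner_ge_zero order_le_neq_trans by metis
  then have "A_norm A x \<noteq> 0"
    using A_inner_Cauchy_Schwarz[OF assms(1), of x "A x"] by (auto simp: A_inner_def)
  then have "0 < A_norm A x"
    using A_norm_nonneg[OF assms(1)] by (simp add: order_le_neq_trans)
  then show ?thesis
    by (intro exI[of _ "scaleC (of_real (1 / A_norm A x)) x"])
      (simp add: A_norm_scaleC[OF assms(1)] norm_divide)
qed

section \<open>Operators in B_A(H) are bounded for the A-seminorm\<close>

lemma log_convex_power_bound:
  fixes t :: "nat \<Rightarrow> real"
  assumes nonneg: "\<And>k. 0 \<le> t k" and log_convex: "\<And>k. (t k)\<^sup>2 \<le> t (2 * k) * t 0"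
    and growth: "\<And>k. (t k)\<^sup>2 \<le> c ^ (2 * k) * L"
  shows "t 1 ^ 2 ^ Suc n * (t 0)\<^sup>2 \<le> (c * t 0) ^ 2 ^ Suc n * L"
proof (cases "t 0 = 0")
  case True
  then show ?thesis by (simp add: power_0_left)
next
  case False
  then have "0 < t 0"
    using nonneg[of 0] by simp
  have square: "x ^ (2 * 2 ^ n) = (x ^ 2 ^ n)\<^sup>2" for x :: real and n
    by (simp add: power_mult[symmetric] mult.commute)
  have iterate: "t 1 ^ 2 ^ n * t 0 \<le> t 0 ^ 2 ^ n * t (2 ^ n)" for n
  proof (induction n)
    case 0
    then show ?case by (simp add: mult.commute)
  next
    case (Suc n)
    have "(t 1 ^ 2 ^ n * t 0)\<^sup>2 \<le> (t 0 ^ 2 ^ n * t (2 ^ n))\<^sup>2"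
      using Suc.IH nonneg by (intro power_mono) auto
    also have "\<dots> \<le> (t 0 ^ 2 ^ Suc n * t (2 ^ Suc n)) * t 0"
      using mult_left_mono[OF log_convex[of "2 ^ n"], of "t 0 ^ 2 ^ Suc n"]
      by (simp add: power_mult_distrib square mult_ac)
    finally have "(t 1 ^ 2 ^ Suc n * t 0) * t 0 \<le> (t 0 ^ 2 ^ Suc n * t (2 ^ Suc n)) * t 0"
      by (simp add: power_mult_distrib square power2_eq_square mult_ac)
    then show ?case
      using \<open>0 < t 0\<close> by simp
  qed
  have "(t 1 ^ 2 ^ n * t 0)\<^sup>2 \<le> (t 0 ^ 2 ^ n * t (2 ^ n))\<^sup>2"
    using iterate nonneg by (intro power_mono) auto
  also have "\<dots> \<le> (t 0 ^ 2 ^ n)\<^sup>2 * (c ^ (2 * 2 ^ n) * L)"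
    using growth[of "2 ^ n"] by (simp add: power_mult_distrib mult_left_mono)
  finally show ?thesis
    by (simp add: power_mult_distrib square mult_ac)
qed

lemma le_growth_rate_of_log_convex:
  fixes t :: "nat \<Rightarrow> real"
  assumes nonneg: "\<And>k. 0 \<le> t k" and log_convex: "\<And>k. (t k)\<^sup>2 \<le> t (2 * k) * t 0"
    and growth: "\<And>k. (t k)\<^sup>2 \<le> c ^ (2 * k) * L" and "0 \<le> c"
  shows "t 1 \<le> c * t 0"
proof (rule ccontr)
  assume "\<not> t 1 \<le> c * t 0"
  then have "c * t 0 < t 1"
    by simp
  have "0 < t 0"
    using log_convex[of 1] nonneg[of 0] \<open>c * t 0 < t 1\<close> by (cases "t 0 = 0") simp_all
  then have "0 \<le> c * t 0"
    using \<open>0 \<le> c\<close> by simp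
  then have "0 < t 1"
    using \<open>c * t 0 < t 1\<close> by linarith
  define r where "r = c * t 0 / t 1"
  have r: "0 \<le> r" "r < 1"
    using \<open>0 < t 1\<close> \<open>c * t 0 < t 1\<close> \<open>0 \<le> c * t 0\<close> by (simp_all add: r_def)
  have "(t 0)\<^sup>2 \<le> L" "0 < (t 0)\<^sup>2"
    using growth[of 0] \<open>0 < t 0\<close> by simp_all
  then have "0 < L"
    by linarith
  obtain n where "r ^ n < (t 0)\<^sup>2 / L"
    using real_arch_pow_inv[OF _ r(2)] \<open>0 < t 0\<close> \<open>0 < L\<close> by force
  then have "r ^ n * L < (t 0)\<^sup>2"
    using \<open>0 < L\<close> by (simp add: pos_less_divide_eq)
  moreover have "n \<le> 2 ^ Suc n"
    using less_exp[of n] by (simp only: power_Suc)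
  then have "r ^ 2 ^ Suc n * L \<le> r ^ n * L"
    using r \<open>0 < L\<close> by (intro mult_right_mono power_decreasing) simp_all
  moreover have "(t 0)\<^sup>2 \<le> r ^ 2 ^ Suc n * L"
    using log_convex_power_bound[OF nonneg log_convex growth, of n] \<open>0 < t 1\<close>
    by (simp add: r_def field_simps)
  ultimately show False
    by linarith
qed

lemma uniformly_bounded_on_some_ball:
  fixes f :: "'i \<Rightarrow> 'a::{real_normed_vector, complete_space} \<Rightarrow> 'b::real_normed_vector"
  assumes continuous: "\<And>i. i \<in> I \<Longrightarrow> continuous_on UNIV (f i)"
    and pointwise: "\<And>x. \<exists>B. \<forall>i\<in>I. norm (f i x) \<le> B"
  obtains n y r where "r > 0" and "\<And>i z. i \<in> I \<Longrightarrow> z \<in> ball y r \<Longrightarrow> norm (f i z) \<le> real n"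
proof -
  define G where "G n = {x. \<forall>i\<in>I. norm (f i x) \<le> real n}" for n
  have closed_G: "closed (G n)" for n
  proof -
    have "G n = (\<Inter>i\<in>I. {x. norm (f i x) \<le> real n})"
      by (auto simp: G_def)
    moreover have "closed {x. norm (f i x) \<le> real n}" if "i \<in> I" for i
      using continuous[OF that] by (intro closed_Collect_le continuous_intros) auto
    ultimately show ?thesis
      by (simp add: closed_INT)
  qed
  have cover: "\<Union>(range G) = UNIV"
  proof -
    have "x \<in> G (nat \<lceil>B\<rceil>)" if "\<forall>i\<in>I. norm (f i x) \<le> B" for x B
      using that real_nat_ceiling_ge[of B] by (simp add: G_def) (meson order_trans)
    then have "x \<in> \<Union>(range G)" for x
      using pointwise[of x] by blast
    then show ?thesis
      by blast
  qed
  have "\<exists>n. interior (G n) \<noteq> {}"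
  proof (rule ccontr)
    assume "\<nexists>n. interior (G n) \<noteq> {}"
    then have "closedin euclidean (G n) \<and> euclidean interior_of (G n) = {}" for n
      using closed_G[of n] closed_closedin by auto
    then have "euclidean interior_of \<Union>(range G) = {}"
      using completely_metrizable_space_euclidean by (intro Baire_category_alt) auto
    then show False
      using cover by simp
  qed
  then obtain n y where "y \<in> interior (G n)"
    by blast
  then obtain r where "r > 0" and "ball y r \<subseteq> G n"
    using mem_interior by blast
  then show ?thesis
    using that[of r y n] by (simp add: G_def subset_eq)
qed

lemma uniform_boundedness:
  fixes f :: "'i \<Rightarrow> 'a::{real_normed_vector, complete_space} \<Rightarrow> 'b::real_normed_vector"
  assumes linear: "\<And>i. i \<in> I \<Longrightarrow> bounded_linear (f i)"
    and pointwise: "\<And>x. \<exists>B. \<forall>i\<in>I. norm (f i x) \<le> B"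
  shows "\<exists>M\<ge>0. \<forall>i\<in>I. \<forall>x. norm (f i x) \<le> M * norm x"
proof -
  obtain n y r where "r > 0" and ball: "\<And>i z. i \<in> I \<Longrightarrow> z \<in> ball y r \<Longrightarrow> norm (f i z) \<le> real n"
    using uniformly_bounded_on_some_ball[OF linear_continuous_on[OF linear] pointwise] by metis
  have small: "norm (f i z) \<le> 2 * real n" if "i \<in> I" "norm z < r" for i z
  proof -
    have "norm (f i (y + z)) \<le> real n" "norm (f i y) \<le> real n"
      using ball[OF that(1)] \<open>r > 0\<close> that(2) by (simp_all add: dist_norm)
    then show ?thesis
      using norm_triangle_ineq4[of "f i (y + z)" "f i y"]
      by (simp add: linear_add[OF bounded_linear.linear[OF linear[OF that(1)]]])
  qed
  have "norm (f i x) \<le> 4 * real n / r * norm x" if "i \<in> I" for i x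
  proof (cases "x = 0")
    case True
    then show ?thesis
      using linear_0[OF bounded_linear.linear[OF linear[OF that]]] by simp
  next
    case False
    define s where "s = r / (2 * norm x)"
    have "0 < s" "norm (scaleR s x) < r"
      using False \<open>r > 0\<close> by (simp_all add: s_def)
    then have "norm (f i (scaleR s x)) \<le> 2 * real n"
      using small[OF that] by blast
    then have "s * norm (f i x) \<le> 2 * real n"
      using \<open>0 < s\<close> by (simp add: linear_scale[OF bounded_linear.linear[OF linear[OF that]]])
    then show ?thesis
      using False \<open>r > 0\<close> by (simp add: s_def field_simps)
  qed
  moreover have "0 \<le> 4 * real n / r"
    using \<open>r > 0\<close> by simp
  ultimately show ?thesis
    by blast
qed

lemma selfadjoint_funpow_shift:
  assumes "\<And>u v. B (S u) v = B u (S v)"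
  shows "B ((S ^^ i) u) ((S ^^ j) v) = B ((S ^^ (i + j)) u) v"
proof (induction j arbitrary: i)
  case 0
  then show ?case by simp
next
  case (Suc j)
  have "B ((S ^^ i) u) ((S ^^ Suc j) v) = B ((S ^^ Suc i) u) ((S ^^ j) v)"
    by (simp add: assms)
  then show ?case
    using Suc.IH[of "Suc i"] by simp
qed

lemma A_norm_le_of_A_selfadjoint:
  fixes A S :: "'a::complex_inner_space \<Rightarrow> 'a"
  assumes A: "positive_op A"
    and selfadjoint: "\<And>u v. A_inner A (S u) v = A_inner A u (S v)"
    and bound: "\<And>u. norm (A (S u)) \<le> c * norm (A u)" and "0 \<le> c"
  shows "A_norm A (S x) \<le> c * A_norm A x"
proof -
  have power_bound: "norm (A ((S ^^ k) u)) \<le> c ^ k * norm (A u)" for k u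
  proof (induction k)
    case 0
    then show ?case by simp
  next
    case (Suc k)
    then show ?case
      using bound[of "(S ^^ k) u"] mult_left_mono[OF Suc.IH \<open>0 \<le> c\<close>] by simp
  qed
  define t where "t k = A_norm A ((S ^^ k) x)" for k
  have square: "(t k)\<^sup>2 \<le> cmod (A_inner A ((S ^^ (2 * k)) x) x)" for k
    using complex_Re_le_cmod
    by (simp add: t_def power2_A_norm[OF A] selfadjoint_funpow_shift[of "A_inner A", OF selfadjoint] mult_2)
  have "t 1 \<le> c * t 0"
  proof (rule le_growth_rate_of_log_convex)
    show "0 \<le> t k" for k
      by (simp add: t_def A_norm_nonneg[OF A])
    show "(t k)\<^sup>2 \<le> t (2 * k) * t 0" for k
      using order_trans[OF square A_inner_Cauchy_Schwarz[OF A]] by (simp add: t_def)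
    show "(t k)\<^sup>2 \<le> c ^ (2 * k) * (norm (A x) * norm x)" for k
      using square[of k] cinner_Cauchy_Schwarz[of "A ((S ^^ (2 * k)) x)" x]
        mult_right_mono[OF power_bound[of "2 * k" x] norm_ge_zero[of x]]
      by (simp add: A_inner_def mult.assoc)
  qed (rule \<open>0 \<le> c\<close>)
  then show ?thesis
    by (simp add: t_def)
qed

lemma B_A_adjoint_range:
  assumes "T \<in> B_A A"
  obtains W where "\<And>y. adjoint_op T (A y) = A (W y)"
proof -
  have "\<forall>y. \<exists>w. adjoint_op T (A y) = A w"
    using assms by (auto simp: B_A_def image_subset_iff)
  then show ?thesis
    using that by metis
qed

lemma cinner_A_adjoint_transfer:
  fixes A T :: "'a::{complex_inner_space, complete_space} \<Rightarrow> 'a"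
  assumes "positive_op A" and "bounded_clinear_op T" and "adjoint_op T (A y) = A w"
  shows "cinner y (A (T u)) = cinner w (A u)"
proof -
  have "cinner y (A (T u)) = cnj (cinner (T u) (A y))"
    by (metis cinner_commute positive_op_selfadjoint[OF assms(1)])
  also have "\<dots> = cnj (cinner u (A w))"
    by (simp add: adjoint_op_cinner[OF assms(2)] assms(3))
  also have "\<dots> = cinner w (A u)"
    by (metis cinner_commute positive_op_selfadjoint[OF assms(1)])
  finally show ?thesis .
qed

lemma B_A_range_bound:
  fixes A T :: "'a::{complex_inner_space, complete_space} \<Rightarrow> 'a"
  assumes A: "positive_op A" and T: "T \<in> B_A A"
  shows "\<exists>M\<ge>0. \<forall>u. norm (A (T u)) \<le> M * norm (A u)"
proof -
  have bT: "bounded_clinear_op T"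
    using T by (simp add: B_A_def)
  obtain W where "\<And>y. adjoint_op T (A y) = A (W y)"
    using B_A_adjoint_range[OF T] by blast
  note transfer = cinner_A_adjoint_transfer[OF A bT this]
  have "\<exists>M\<ge>0. \<forall>u\<in>{u. norm (A u) \<le> 1}. \<forall>y. norm (cinner y (A (T u))) \<le> M * norm y"
  proof (rule uniform_boundedness)
    show "bounded_linear (\<lambda>y. cinner y (A (T u)))" for u
      by (rule bounded_linear_cinner_left)
    show "\<exists>B. \<forall>u\<in>{u. norm (A u) \<le> 1}. norm (cinner y (A (T u))) \<le> B" for y
      using cinner_Cauchy_Schwarz[of "W y"]
      by (metis transfer mem_Collect_eq mult_left_le norm_ge_zero order_trans)
  qed
  then obtain M where "M \<ge> 0" and M: "\<And>u y. norm (A u) \<le> 1 \<Longrightarrow> cmod (cinner y (A (T u))) \<le> M * norm y"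
    by auto
  have unit: "norm (A (T u)) \<le> M" if "norm (A u) \<le> 1" for u
  proof -
    have "norm (A (T u)) * norm (A (T u)) \<le> M * norm (A (T u))"
      using M[OF that, of "A (T u)"] by (simp add: cinner_self_eq_power2_norm power2_eq_square norm_mult)
    then show ?thesis
      using \<open>M \<ge> 0\<close> by (cases "A (T u) = 0") simp_all
  qed
  have "norm (A (T u)) \<le> M * norm (A u)" for u
  proof (cases "A u = 0")
    case True
    then have "cinner (A (T u)) (A (T u)) = 0"
      by (simp add: transfer)
    then show ?thesis
      using True by (simp add: cinner_eq_zero_iff)
  next
    case False
    define s where "s = 1 / norm (A u)"
    have "norm (A (T (scaleR s u))) \<le> M"
      using False by (intro unit) (simp add: s_def bounded_clinear_op_scaleR positive_op_bounded[OF A])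
    then show ?thesis
      using False by (simp add: s_def bounded_clinear_op_scaleR positive_op_bounded[OF A] bT field_simps)
  qed
  then show ?thesis
    using \<open>M \<ge> 0\<close> by blast
qed

definition A_bounded_op :: "('a::complex_inner_space \<Rightarrow> 'a) \<Rightarrow> ('a \<Rightarrow> 'a) \<Rightarrow> bool" where
  "A_bounded_op A T \<longleftrightarrow> (\<exists>C\<ge>0. \<forall>x. A_norm A (T x) \<le> C * A_norm A x)"

lemma A_norm_le_of_factorization:
  fixes A S T :: "'a::complex_inner_space \<Rightarrow> 'a"
  assumes A: "positive_op A"
    and factor: "\<And>u v. A_inner A (S u) v = A_inner A (T u) (T v)"
    and bound: "\<And>u. norm (A (S u)) \<le> c * norm (A u)" and "0 \<le> c"
  shows "A_norm A (T x) \<le> sqrt c * A_norm A x"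
proof -
  have herm: "A_inner A u v = cnj (A_inner A v u)" for u v
    using hermitian_form_A_inner[OF A] unfolding hermitian_form_def by blast
  have "A_inner A (S u) v = A_inner A u (S v)" for u v
    by (metis factor herm)
  from A_norm_le_of_A_selfadjoint[OF A this bound \<open>0 \<le> c\<close>]
  have S_bound: "A_norm A (S x) \<le> c * A_norm A x" .
  have "(A_norm A (T x))\<^sup>2 = Re (A_inner A (S x) x)"
    by (simp add: power2_A_norm[OF A] factor)
  also have "\<dots> \<le> A_norm A (S x) * A_norm A x"
    using order_trans[OF complex_Re_le_cmod A_inner_Cauchy_Schwarz[OF A]] .
  also have "\<dots> \<le> c * (A_norm A x)\<^sup>2"
    using mult_right_mono[OF S_bound A_norm_nonneg[OF A]] by (simp add: power2_eq_square mult.assoc)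
  also have "\<dots> = (sqrt c * A_norm A x)\<^sup>2"
    using \<open>0 \<le> c\<close> by (simp add: power_mult_distrib)
  finally show ?thesis
    by (rule power2_le_imp_le) (simp add: A_norm_nonneg[OF A] \<open>0 \<le> c\<close>)
qed

lemma B_A_imp_A_bounded_op:
  fixes A T :: "'a::{complex_inner_space, complete_space} \<Rightarrow> 'a"
  assumes A: "positive_op A" and T: "T \<in> B_A A"
  shows "A_bounded_op A T"
proof -
  have bT: "bounded_clinear_op T"
    using T by (simp add: B_A_def)
  obtain M where "M \<ge> 0" and M: "\<And>u. norm (A (T u)) \<le> M * norm (A u)"
    using B_A_range_bound[OF A T] by blast
  obtain K where "K \<ge> 0" and K: "\<And>y. norm (adjoint_op T y) \<le> K * norm y"
    using adjoint_op_bound[OF bT] by blast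
  obtain W where W: "\<And>y. adjoint_op T (A y) = A (W y)"
    using B_A_adjoint_range[OF T] by blast
  have "A_norm A (T x) \<le> sqrt (K * M) * A_norm A x" for x
  proof (rule A_norm_le_of_factorization[OF A])
    show "A_inner A (W (T u)) v = A_inner A (T u) (T v)" for u v
    proof -
      have "A_inner A (W (T u)) v = cnj (cinner v (adjoint_op T (A (T u))))"
        by (simp add: A_inner_def flip: W cinner_commute)
      also have "\<dots> = A_inner A (T u) (T v)"
        by (simp add: A_inner_def adjoint_op_cinner[OF bT, symmetric] flip: cinner_commute)
      finally show ?thesis .
    qed
    show "norm (A (W (T u))) \<le> K * M * norm (A u)" for u
    proof -
      have "norm (A (W (T u))) \<le> K * norm (A (T u))"
        using K by (simp flip: W)
      also have "\<dots> \<le> K * (M * norm (A u))"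
        by (rule mult_left_mono[OF M \<open>K \<ge> 0\<close>])
      finally show ?thesis
        by (simp add: mult.assoc)
    qed
  qed (simp add: \<open>K \<ge> 0\<close> \<open>M \<ge> 0\<close>)
  then show ?thesis
    unfolding A_bounded_op_def using \<open>K \<ge> 0\<close> \<open>M \<ge> 0\<close> by (intro exI[of _ "sqrt (K * M)"]) simp
qed

section \<open>The block row operator\<close>

lemma power2_AA_norm_Pair:
  assumes "positive_op A"
  shows "(AA_norm A (x, y))\<^sup>2 = (A_norm A x)\<^sup>2 + (A_norm A y)\<^sup>2"
  using positive_op_cinner_self[OF assms, of x] positive_op_cinner_self[OF assms, of y]
  by (simp add: AA_norm_def AA_inner_def power2_A_norm[OF assms] A_inner_def)

lemma AA_norm_nonneg: "positive_op A \<Longrightarrow> 0 \<le> AA_norm A z"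
  using positive_op_cinner_self[of A "fst z"] positive_op_cinner_self[of A "snd z"]
  by (simp add: AA_norm_def AA_inner_def A_inner_def)

lemma AA_inner_block_row:
  assumes "bounded_clinear_op A"
  shows "AA_inner A (block_op P Q (\<lambda>x. 0) (\<lambda>x. 0) (x, y)) (x, y) = A_inner A (P x + Q y) x"
  by (simp add: AA_inner_def block_op_def A_inner_def bounded_clinear_op_zero[OF assms])

lemma bdd_above_block_row_values:
  assumes A: "positive_op A" and "A_bounded_op A P" and "A_bounded_op A Q"
  shows "bdd_above {cmod (AA_inner A (block_op P Q (\<lambda>x. 0) (\<lambda>x. 0) z) z) | z. AA_norm A z = 1}"
proof -
  obtain CP CQ where "CP \<ge> 0" "CQ \<ge> 0"
    and CP: "\<And>x. A_norm A (P x) \<le> CP * A_norm A x" and CQ: "\<And>x. A_norm A (Q x) \<le> CQ * A_norm A x"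
    using assms(2,3) unfolding A_bounded_op_def by blast
  have "cmod (AA_inner A (block_op P Q (\<lambda>x. 0) (\<lambda>x. 0) (x, y)) (x, y)) \<le> CP + CQ"
    if "AA_norm A (x, y) = 1" for x y
  proof -
    have "(A_norm A x)\<^sup>2 + (A_norm A y)\<^sup>2 = 1"
      using that power2_AA_norm_Pair[OF A, of x y] by simp
    then have "(A_norm A x)\<^sup>2 \<le> 1" "(A_norm A y)\<^sup>2 \<le> 1"
      using zero_le_power2[of "A_norm A x"] zero_le_power2[of "A_norm A y"] by linarith+
    then have unit: "A_norm A x \<le> 1" "A_norm A y \<le> 1"
      using A_norm_nonneg[OF A] by (simp_all add: power_le_one_iff)
    have "cmod (A_inner A (P x + Q y) x) \<le> cmod (A_inner A (P x) x) + cmod (A_inner A (Q y) x)"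
      using hermitian_form_A_inner[OF A] norm_triangle_ineq unfolding hermitian_form_def by metis
    also have "\<dots> \<le> A_norm A (P x) * A_norm A x + A_norm A (Q y) * A_norm A x"
      by (intro add_mono A_inner_Cauchy_Schwarz[OF A])
    also have "\<dots> \<le> CP + CQ"
      using CP[of x] CQ[of y] unit \<open>CP \<ge> 0\<close> \<open>CQ \<ge> 0\<close> A_norm_nonneg[OF A]
      by (smt (verit) mult_left_le mult_mono)
    finally show ?thesis
      by (simp add: AA_inner_block_row positive_op_bounded[OF A])
  qed
  then show ?thesis
    by (intro bdd_aboveI[of _ "CP + CQ"]) auto
qed

lemma block_row_value_at_diagonal_vector:
  assumes A: "positive_op A" and P: "bounded_clinear_op P" and Q: "bounded_clinear_op Q"
    and "cmod s = 1" and "A_norm A x = 1"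
  shows "\<exists>z. AA_norm A z = 1 \<and>
    cmod (AA_inner A (block_op P Q (\<lambda>x. 0) (\<lambda>x. 0) z) z) = cmod (A_inner A (P x + scaleC s (Q x)) x) / 2"
proof (intro exI conjI)
  define h :: real where "h = 1 / sqrt 2"
  define z where "z = (scaleR h x, scaleR h (scaleC s x))"
  have "h * h = 1 / 2"
    by (simp add: h_def)
  have "(AA_norm A z)\<^sup>2 = h\<^sup>2 + h\<^sup>2"
    using assms(4,5) by (simp add: z_def power2_AA_norm_Pair[OF A] scaleR_scaleC A_norm_scaleC[OF A]
        norm_mult power_mult_distrib)
  then have "(AA_norm A z)\<^sup>2 = 1"
    using \<open>h * h = 1 / 2\<close> by (simp add: power2_eq_square)
  then show "AA_norm A z = 1"
    using AA_norm_nonneg[OF A, of z] by (simp add: power2_eq_1_iff)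
  have "block_op P Q (\<lambda>x. 0) (\<lambda>x. 0) z = (scaleR h (P x + scaleC s (Q x)), 0)"
    by (simp add: block_op_def z_def bounded_clinear_op_scaleR[OF P] bounded_clinear_op_scaleR[OF Q]
        bounded_clinear_op_scaleC[OF Q] scaleR_add_right)
  then have "AA_inner A (block_op P Q (\<lambda>x. 0) (\<lambda>x. 0) z) z
      = of_real (h * h) * A_inner A (P x + scaleC s (Q x)) x"
    by (simp add: AA_inner_def z_def A_inner_def bounded_clinear_op_scaleR positive_op_bounded[OF A]
        bounded_clinear_op_zero cinner_scaleR_left cinner_scaleR_right)
  then show "cmod (AA_inner A (block_op P Q (\<lambda>x. 0) (\<lambda>x. 0) z) z)
      = cmod (A_inner A (P x + scaleC s (Q x)) x) / 2"
    using \<open>h * h = 1 / 2\<close> by (simp only: norm_mult norm_of_real)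
qed

lemma omega_A_le_omega_AA_block_row:
  assumes A: "positive_op A" "A \<noteq> (\<lambda>x. 0)"
    and P: "bounded_clinear_op P" "A_bounded_op A P" and Q: "bounded_clinear_op Q" "A_bounded_op A Q"
    and "cmod s = 1"
  shows "omega_A A (\<lambda>x. P x + scaleC s (Q x)) \<le> 2 * omega_AA A (block_op P Q (\<lambda>x. 0) (\<lambda>x. 0))"
proof -
  let ?values = "{cmod (AA_inner A (block_op P Q (\<lambda>x. 0) (\<lambda>x. 0) z) z) | z. AA_norm A z = 1}"
  have "cmod (A_inner A (P x + scaleC s (Q x)) x) \<le> 2 * Sup ?values" if x: "A_norm A x = 1" for x
  proof -
    obtain z where "AA_norm A z = 1"
      and "cmod (AA_inner A (block_op P Q (\<lambda>x. 0) (\<lambda>x. 0) z) z) = cmod (A_inner A (P x + scaleC s (Q x)) x) / 2"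
      using block_row_value_at_diagonal_vector[OF A(1) P(1) Q(1) \<open>cmod s = 1\<close> x] by blast
    then have "cmod (A_inner A (P x + scaleC s (Q x)) x) / 2 \<in> ?values"
      by (metis (mono_tags, lifting) mem_Collect_eq)
    then show ?thesis
      using cSup_upper[OF _ bdd_above_block_row_values[OF A(1) P(2) Q(2)]] by fastforce
  qed
  moreover obtain x0 where "A_norm A x0 = 1"
    using A_norm_unit_exists[OF A] by blast
  ultimately show ?thesis
    unfolding omega_A_def omega_AA_def by (intro cSup_least) auto
qed

theorem theorem2p19:
  fixes A P Q :: "'a::{complex_inner_space, complete_space} \<Rightarrow> 'a"
  assumes "positive_op A" and "A \<noteq> (\<lambda>x. 0)"
    and "P \<in> B_A A" and "Q \<in> B_A A"
  shows "omega_AA A (block_op P Q (\<lambda>x. 0) (\<lambda>x. 0)) \<ge>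
    (1/2) * max (omega_A A (\<lambda>x. P x + scaleC \<i> (Q x))) (omega_A A (\<lambda>x. P x - scaleC \<i> (Q x)))"
proof -
  have P: "bounded_clinear_op P" "A_bounded_op A P" and Q: "bounded_clinear_op Q" "A_bounded_op A Q"
    using assms B_A_imp_A_bounded_op by (auto simp: B_A_def)
  note bound = omega_A_le_omega_AA_block_row[OF assms(1,2) P Q]
  have "(\<lambda>x. P x - scaleC \<i> (Q x)) = (\<lambda>x. P x + scaleC (- \<i>) (Q x))"
    by simp
  then show ?thesis
    using bound[of \<i>] bound[of "- \<i>"] by simp
qed

end
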